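(* Assume in addition that $\mathbb{X}_f$ contains an open neighborhood of the origin and that $\mathbb{X}$ is compact. Then $V$ is a Lyapunov function on $\mathbb{X}$ for the closed-loop system $x^+=f(x,\kappa(x))$. That is, $\mathbb{X}$ is invariant under the closed loop, and there are class $\mathcal{K}_\infty$ functions $\alpha_1,\beta$ with $\alpha_1(|x|)\le V(x)\le\beta(|x|)$ and $V(f(x,\kappa(x)))\le V(x)-\alpha_1(|x|)$ for all $x\in\mathbb{X}$. Consequently the origin is asymptotically stable for the closed-loop system $x^+=f(x,\kappa(x))$ on $\mathbb{X}$.
   Context: Consider the discrete-time controlled system $x^+=f(x,u)$ with state $x\in\mathbb{R}^{n}$ and control $u\in\mathbb{R}^{m}$, constraint sets $\mathbb{X}\subset\mathbb{R}^n$, $\mathbb{U}\subset\mathbb{R}^m$, $\mathbb{Y}\subset\mathbb{R}^p$, and a constraint function $h(x,u)\in\mathbb{R}^p$. A control $u$ is feasible at $x\in\mathbb{X}$ if $u\in\mathbb{U}$, $f(x,u)\in\mathbb{X}$ and $h(x,u)\in\mathbb{Y}$. A control sequence $(u(0),\ldots,u(N-1))$ is feasible from $x$ if, for the state sequence defined by $x(0)=x$ and $x(k+1)=f(x(k),u(k))$, each $u(k)$ is feasible at $x(k)$. We are given a stage cost $l(x,u)$, a terminal set $\mathbb{X}_f$ and a terminal cost $V_f$ defined on $\mathbb{X}_f$. Horizon-$N$ problem at $x$: minimize $\sum_{k=0}^{N-1}l(x(k),u(k))+V_f(x(N))$ over control sequences that are feasible from $x$ and satisfy $x(N)\in\mathbb{X}_f$.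 Let $V_N^0(x)$ be its minimum value, which is assumed to be attained whenever the feasible set is nonempty. Let $(u^0_N(0),\ldots,u^0_N(N-1))$ be a minimizer, and set $\kappa_N(x)=u_N^0(0)$. For $N=0$, $V_0^0(x)=V_f(x)$ for $x\in\mathbb{X}_f$. Standing assumptions: (A1) $f,l,h,V_f$ are continuous on an open set containing $\mathbb{X}\times\mathbb{U}$ (for $V_f$, an open set containing $\mathbb{X}_f$). The stage cost $l$ is nonnegative definite in $(x,u)$ and positive definite in $u$. $V_f$ is positive definite on $\mathbb{X}_f$. Moreover $f(0,0)=0$, $l(0,0)=0$ and $V_f(0)=0$. (A2) $\mathbb{X}$ and $\mathbb{X}_f$ are closed, $\mathbb{X}_f\subset\mathbb{X}$, $\mathbb{U}$ is compact, and $\mathbb{X},\mathbb{X}_f,\mathbb{U}$ each contain a neighborhood of the origin. (A3) For every $x\in\mathbb{X}_f$ there is a control $u$ feasible at $x$ with $f(x,u)\in\mathbb{X}_f$ and $l(x,u)+V_f(f(x,u))\le V_f(x)$. (A4) For every $x\in\mathbb{X}$ there exist an integer $N\ge0$ and a feasible control sequence of length $N$ from $x$ whose state sequence satisfies $x(N)\in\mathbb{X}_f$. For $x\in\mathbb{X}$, $N(x)$ denotes the minimum such $N$. (A5) There is an integer $M\ge 0$ with $N(x)\le M$ for all $x\in\mathbb{X}$. (A6) There are class $\mathcal{K}_\infty$ functions $\alpha_1,\alpha_2$ with $l(x,u)\ge\alpha_1(|x|)$ for all $x\in\mathbb{X}$, $u\in\mathbb{U}$, and $V_f(x)\le\alpha_2(|x|)$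 for all $x\in\mathbb{X}_f$. Define $V(x)=V^0_{N(x)}(x)$ for $x\in\mathbb{X}$. For $N(x)\ge1$ set $\kappa(x)=\kappa_{N(x)}(x)$. For $N(x)=0$ (equivalently $x\in\mathbb{X}_f$), let $\kappa(x)$ be a feasible control $u$ as in (A3). *)

theory Defs
  imports "HOL-Analysis.Analysis"
begin

definition class_K_inf :: "(real \<Rightarrow> real) \<Rightarrow> bool" where
  "class_K_inf \<alpha> \<longleftrightarrow> continuous_on {0..} \<alpha> \<and> \<alpha> 0 = 0 \<and> strict_mono_on {0..} \<alpha>
     \<and> filterlim \<alpha> at_top at_top"

primrec traj :: "('x \<Rightarrow> 'u \<Rightarrow> 'x) \<Rightarrow> 'x \<Rightarrow> (nat \<Rightarrow> 'u) \<Rightarrow> nat \<Rightarrow> 'x" where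
  "traj f x us 0 = x"
| "traj f x us (Suc k) = f (traj f x us k) (us k)"

definition feasible_ctrl ::
  "('x \<Rightarrow> 'u \<Rightarrow> 'x) \<Rightarrow> ('x \<Rightarrow> 'u \<Rightarrow> 'y) \<Rightarrow> 'x set \<Rightarrow> 'u set \<Rightarrow> 'y set \<Rightarrow> 'x \<Rightarrow> 'u \<Rightarrow> bool" where
  "feasible_ctrl f h X U Y x u \<longleftrightarrow> u \<in> U \<and> f x u \<in> X \<and> h x u \<in> Y"

definition feasible_seq ::
  "('x \<Rightarrow> 'u \<Rightarrow> 'x) \<Rightarrow> ('x \<Rightarrow> 'u \<Rightarrow> 'y) \<Rightarrow> 'x set \<Rightarrow> 'u set \<Rightarrow> 'y set \<Rightarrow> nat \<Rightarrow> 'x \<Rightarrow> (nat \<Rightarrow> 'u) \<Rightarrow> bool" where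
  "feasible_seq f h X U Y N x us \<longleftrightarrow> (\<forall>k<N. feasible_ctrl f h X U Y (traj f x us k) (us k))"

definition admissible ::
  "('x \<Rightarrow> 'u \<Rightarrow> 'x) \<Rightarrow> ('x \<Rightarrow> 'u \<Rightarrow> 'y) \<Rightarrow> 'x set \<Rightarrow> 'u set \<Rightarrow> 'y set \<Rightarrow> 'x set \<Rightarrow> nat \<Rightarrow> 'x \<Rightarrow> (nat \<Rightarrow> 'u) \<Rightarrow> bool" where
  "admissible f h X U Y Xf N x us \<longleftrightarrow> feasible_seq f h X U Y N x us \<and> traj f x us N \<in> Xf"

definition cost ::
  "('x \<Rightarrow> 'u \<Rightarrow> 'x) \<Rightarrow> ('x \<Rightarrow> 'u \<Rightarrow> real) \<Rightarrow> ('x \<Rightarrow> real) \<Rightarrow> nat \<Rightarrow> 'x \<Rightarrow> (nat \<Rightarrow> 'u) \<Rightarrow> real" where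
  "cost f l Vf N x us = (\<Sum>k<N. l (traj f x us k) (us k)) + Vf (traj f x us N)"

text \<open>Optimal value V_N^0 (the minimum, assumed attained).\<close>
definition VN ::
  "('x \<Rightarrow> 'u \<Rightarrow> 'x) \<Rightarrow> ('x \<Rightarrow> 'u \<Rightarrow> 'y) \<Rightarrow> ('x \<Rightarrow> 'u \<Rightarrow> real) \<Rightarrow> ('x \<Rightarrow> real) \<Rightarrow>
   'x set \<Rightarrow> 'u set \<Rightarrow> 'y set \<Rightarrow> 'x set \<Rightarrow> nat \<Rightarrow> 'x \<Rightarrow> real" where
  "VN f h l Vf X U Y Xf N x = Inf (cost f l Vf N x ` {us. admissible f h X U Y Xf N x us})"

definition Nmin ::
  "('x \<Rightarrow> 'u \<Rightarrow> 'x) \<Rightarrow> ('x \<Rightarrow> 'u \<Rightarrow> 'y) \<Rightarrow> 'x set \<Rightarrow> 'u set \<Rightarrow> 'y set \<Rightarrow> 'x set \<Rightarrow> 'x \<Rightarrow> nat" where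
  "Nmin f h X U Y Xf x = (LEAST N. \<exists>us. admissible f h X U Y Xf N x us)"

definition Vfun ::
  "('x \<Rightarrow> 'u \<Rightarrow> 'x) \<Rightarrow> ('x \<Rightarrow> 'u \<Rightarrow> 'y) \<Rightarrow> ('x \<Rightarrow> 'u \<Rightarrow> real) \<Rightarrow> ('x \<Rightarrow> real) \<Rightarrow>
   'x set \<Rightarrow> 'u set \<Rightarrow> 'y set \<Rightarrow> 'x set \<Rightarrow> 'x \<Rightarrow> real" where
  "Vfun f h l Vf X U Y Xf x = VN f h l Vf X U Y Xf (Nmin f h X U Y Xf x) x"

definition asymp_stable_on :: "('x::real_normed_vector \<Rightarrow> 'x) \<Rightarrow> 'x set \<Rightarrow> bool" where
  "asymp_stable_on g X \<longleftrightarrow>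
     (\<forall>\<epsilon>>0. \<exists>\<delta>>0. \<forall>x\<in>X. norm x < \<delta> \<longrightarrow> (\<forall>k. norm ((g ^^ k) x) < \<epsilon>)) \<and>
     (\<forall>x\<in>X. (\<lambda>k. (g ^^ k) x) \<longlonglongrightarrow> 0)"

end

theory Submission
  imports Defs
begin

text \<open>
  By Bellman's principle, the tail of an optimal horizon-\<open>N(x)\<close> sequence is admissible for
  horizon \<open>N(x) - 1\<close> from the successor state, and \<open>N\<close> drops by exactly one along the closed
  loop; hence \<open>V\<close> decreases at least by the stage cost \<open>l(x, \<kappa>(x)) \<ge> \<alpha>\<^sub>1(|x|)\<close>. Nonnegativity of
  \<open>V\<close> then gives the lower bound. Near the origin \<open>V = V\<^sub>f \<le> \<alpha>\<^sub>2\<close>, while on the compact set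
  \<open>\<bbbX>\<close> the value is bounded by \<open>M\<close> times the maximal stage cost plus the maximal terminal cost;
  adding a linear function to \<open>\<alpha>\<^sub>2\<close> covers both regimes. Asymptotic stability is the standard
  discrete-time Lyapunov argument: the decrease makes \<open>\<Sum>\<^sub>k \<alpha>\<^sub>1(|x(k)|)\<close> summable.
\<close>

lemma traj_shift: "traj f (f x (us 0)) (\<lambda>k. us (Suc k)) k = traj f x us (Suc k)"
  by (induction k) auto

lemma traj_Cons: "traj f x (case_nat u vs) (Suc k) = traj f (f x u) vs k"
  using traj_shift[of f x "case_nat u vs" k] by simp

lemma class_K_inf_mono: "class_K_inf \<alpha> \<Longrightarrow> 0 \<le> s \<Longrightarrow> s \<le> t \<Longrightarrow> \<alpha> s \<le> \<alpha> t"
  unfolding class_K_inf_def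
  by (cases "s = t") (auto intro!: less_imp_le strict_mono_onD[of "{0..}" \<alpha>])

lemma class_K_inf_nonneg: "class_K_inf \<alpha> \<Longrightarrow> 0 \<le> s \<Longrightarrow> 0 \<le> \<alpha> s"
  using class_K_inf_mono[of \<alpha> 0 s] by (simp add: class_K_inf_def)

lemma class_K_inf_pos: "class_K_inf \<alpha> \<Longrightarrow> 0 < s \<Longrightarrow> 0 < \<alpha> s"
  unfolding class_K_inf_def using strict_mono_onD[of "{0..}" \<alpha> 0 s] by auto

lemma class_K_inf_less_imp_less:
  "class_K_inf \<alpha> \<Longrightarrow> 0 \<le> s \<Longrightarrow> 0 \<le> t \<Longrightarrow> \<alpha> s < \<alpha> t \<Longrightarrow> s < t"
  using class_K_inf_mono[of \<alpha> t s] by force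

lemma class_K_inf_add_linear:
  assumes \<alpha>: "class_K_inf \<alpha>" and c: "0 \<le> c"
  shows "class_K_inf (\<lambda>s. \<alpha> s + c * s)"
  unfolding class_K_inf_def
proof (intro conjI)
  show "continuous_on {0..} (\<lambda>s. \<alpha> s + c * s)"
    using \<alpha> by (intro continuous_intros) (auto simp: class_K_inf_def)
  show "\<alpha> 0 + c * 0 = 0" using \<alpha> by (simp add: class_K_inf_def)
  show "strict_mono_on {0..} (\<lambda>s. \<alpha> s + c * s)"
  proof (rule strict_mono_onI)
    fix s t :: real assume "s \<in> {0..}" "t \<in> {0..}" "s < t"
    then show "\<alpha> s + c * s < \<alpha> t + c * t"
      using \<alpha> c strict_mono_onD[of "{0..}" \<alpha> s t] mult_left_mono[of s t c]
      unfolding class_K_inf_def by fastforce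
  qed
  show "filterlim (\<lambda>s. \<alpha> s + c * s) at_top at_top"
  proof (rule filterlim_at_top_mono)
    show "filterlim \<alpha> at_top at_top" using \<alpha> by (simp add: class_K_inf_def)
    show "\<forall>\<^sub>F s in at_top. \<alpha> s \<le> \<alpha> s + c * s"
      using eventually_ge_at_top[of "0::real"] by eventually_elim (use c in simp)
  qed
qed

lemma class_K_inf_bound_from_local_bound:
  fixes V :: "'x::real_normed_vector \<Rightarrow> real"
  assumes \<alpha>: "class_K_inf \<alpha>" and r: "0 < r"
    and local: "\<And>x. x \<in> S \<Longrightarrow> norm x < r \<Longrightarrow> V x \<le> \<alpha> (norm x)"
    and global: "\<And>x. x \<in> S \<Longrightarrow> V x \<le> C"
  shows "\<exists>\<beta>. class_K_inf \<beta> \<and> (\<forall>x\<in>S. V x \<le> \<beta> (norm x))"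
proof (intro exI conjI ballI)
  define c where "c = max 0 C / r"
  have c: "0 \<le> c" using r by (simp add: c_def)
  show "class_K_inf (\<lambda>s. \<alpha> s + c * s)" by (rule class_K_inf_add_linear[OF \<alpha> c])
  fix x assume x: "x \<in> S"
  have "0 \<le> \<alpha> (norm x)" "0 \<le> c * norm x" using class_K_inf_nonneg[OF \<alpha>] c by simp_all
  moreover have "V x \<le> c * norm x" if "r \<le> norm x"
  proof -
    have "max 0 C * 1 \<le> max 0 C * (norm x / r)"
      using that r by (intro mult_left_mono) (simp_all add: field_simps)
    then show ?thesis using global[OF x] by (simp add: c_def)
  qed
  ultimately show "V x \<le> \<alpha> (norm x) + c * norm x"
    using local[OF x] by (cases "norm x < r") auto
qed

context
  fixes g :: "'x::real_normed_vector \<Rightarrow> 'x" and V :: "'x \<Rightarrow> real" and X :: "'x set"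
    and \<alpha> \<beta> :: "real \<Rightarrow> real"
  assumes \<alpha>: "class_K_inf \<alpha>" and \<beta>: "class_K_inf \<beta>"
    and invariant: "\<And>x. x \<in> X \<Longrightarrow> g x \<in> X"
    and lower: "\<And>x. x \<in> X \<Longrightarrow> \<alpha> (norm x) \<le> V x"
    and upper: "\<And>x. x \<in> X \<Longrightarrow> V x \<le> \<beta> (norm x)"
    and decrease: "\<And>x. x \<in> X \<Longrightarrow> V (g x) \<le> V x - \<alpha> (norm x)"
begin

lemma funpow_in_invariant: "x \<in> X \<Longrightarrow> (g ^^ k) x \<in> X"
  using invariant by (induction k) auto

lemma Lyapunov_sum_le: "x \<in> X \<Longrightarrow> V ((g ^^ k) x) + (\<Sum>i<k. \<alpha> (norm ((g ^^ i) x))) \<le> V x"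
proof (induction k)
  case (Suc k)
  then show ?case using decrease[OF funpow_in_invariant[OF Suc.prems, of k]] by simp
qed simp

lemma Lyapunov_funpow_le: "x \<in> X \<Longrightarrow> V ((g ^^ k) x) \<le> V x"
  using Lyapunov_sum_le[of x k] class_K_inf_nonneg[OF \<alpha>] sum_nonneg[of "{..<k}"]
  by (smt (verit) norm_ge_zero)

lemma Lyapunov_stable:
  assumes e: "0 < \<epsilon>"
  shows "\<exists>\<delta>>0. \<forall>x\<in>X. norm x < \<delta> \<longrightarrow> (\<forall>k. norm ((g ^^ k) x) < \<epsilon>)"
proof -
  have "continuous_on {0..} \<beta>" "\<beta> 0 = 0" using \<beta> by (auto simp: class_K_inf_def)
  then obtain \<delta> where \<delta>: "0 < \<delta>" "\<And>s. s \<in> {0..} \<Longrightarrow> dist s 0 < \<delta> \<Longrightarrow> dist (\<beta> s) 0 < \<alpha> \<epsilon>"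
    using class_K_inf_pos[OF \<alpha> e] unfolding continuous_on_iff by (metis atLeast_iff order_refl)
  have "norm ((g ^^ k) x) < \<epsilon>" if x: "x \<in> X" and "norm x < \<delta>" for x k
  proof (rule class_K_inf_less_imp_less[OF \<alpha> norm_ge_zero less_imp_le[OF e]])
    have "\<beta> (norm x) < \<alpha> \<epsilon>" using \<delta>(2)[of "norm x"] \<open>norm x < \<delta>\<close> by auto
    then show "\<alpha> (norm ((g ^^ k) x)) < \<alpha> \<epsilon>"
      using lower[OF funpow_in_invariant[OF x, of k]] Lyapunov_funpow_le[OF x, of k] upper[OF x]
      by linarith
  qed
  then show ?thesis using \<delta>(1) by blast
qed

lemma Lyapunov_attractive:
  assumes x: "x \<in> X"
  shows "(\<lambda>k. (g ^^ k) x) \<longlonglongrightarrow> 0"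
proof -
  let ?a = "\<lambda>i. \<alpha> (norm ((g ^^ i) x))"
  have "summable ?a"
  proof (rule summableI_nonneg_bounded)
    show "0 \<le> ?a n" for n using class_K_inf_nonneg[OF \<alpha>] by simp
    show "sum ?a {..<n} \<le> V x" for n
      using Lyapunov_sum_le[OF x, of n] lower[OF funpow_in_invariant[OF x, of n]]
        class_K_inf_nonneg[OF \<alpha>, of "norm ((g ^^ n) x)"] by simp
  qed
  then have a: "?a \<longlonglongrightarrow> 0" by (rule summable_LIMSEQ_zero)
  show ?thesis
  proof (rule LIMSEQ_I)
    fix e :: real assume e: "0 < e"
    obtain n0 where "\<And>n. n0 \<le> n \<Longrightarrow> norm (?a n - 0) < \<alpha> e"
      using LIMSEQ_D[OF a class_K_inf_pos[OF \<alpha> e]] by blast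
    then have "norm ((g ^^ n) x) < e" if "n0 \<le> n" for n
      using that class_K_inf_less_imp_less[OF \<alpha> norm_ge_zero less_imp_le[OF e]] by force
    then show "\<exists>n0. \<forall>n\<ge>n0. norm ((g ^^ n) x - 0) < e" by auto
  qed
qed

lemma Lyapunov_asymp_stable_on: "asymp_stable_on g X"
  unfolding asymp_stable_on_def using Lyapunov_stable Lyapunov_attractive by blast

end

locale mpc_problem =
  fixes f :: "'x \<Rightarrow> 'u \<Rightarrow> 'x" and h :: "'x \<Rightarrow> 'u \<Rightarrow> 'y"
    and l :: "'x \<Rightarrow> 'u \<Rightarrow> real" and Vf :: "'x \<Rightarrow> real"
    and X Xf :: "'x set" and U :: "'u set" and Y :: "'y set"
  assumes l_nonneg: "\<And>x u. x \<in> X \<Longrightarrow> u \<in> U \<Longrightarrow> 0 \<le> l x u"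
    and Vf_nonneg: "\<And>x. x \<in> Xf \<Longrightarrow> 0 \<le> Vf x"
    and Xf_subset: "Xf \<subseteq> X"
    and reachable: "\<And>x. x \<in> X \<Longrightarrow> \<exists>N us. admissible f h X U Y Xf N x us"
    and attained: "\<And>N x. x \<in> X \<Longrightarrow> \<exists>us. admissible f h X U Y Xf N x us \<Longrightarrow>
                     \<exists>us. admissible f h X U Y Xf N x us \<and>
                       (\<forall>vs. admissible f h X U Y Xf N x vs \<longrightarrow> cost f l Vf N x us \<le> cost f l Vf N x vs)"
begin

abbreviation "adm \<equiv> admissible f h X U Y Xf"
abbreviation "J \<equiv> cost f l Vf"
abbreviation "Vopt \<equiv> VN f h l Vf X U Y Xf"
abbreviation "Nreach \<equiv> Nmin f h X U Y Xf"
abbreviation "V \<equiv> Vfun f h l Vf X U Y Xf"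

lemma traj_in_X: "x \<in> X \<Longrightarrow> feasible_seq f h X U Y N x us \<Longrightarrow> k \<le> N \<Longrightarrow> traj f x us k \<in> X"
  by (cases k) (auto simp: feasible_seq_def feasible_ctrl_def)

lemma ctrl_in_U: "feasible_seq f h X U Y N x us \<Longrightarrow> k < N \<Longrightarrow> us k \<in> U"
  by (auto simp: feasible_seq_def feasible_ctrl_def)

lemma cost_nonneg:
  assumes "x \<in> X" "adm N x us"
  shows "0 \<le> J N x us"
proof -
  have "0 \<le> (\<Sum>k<N. l (traj f x us k) (us k))"
    using assms traj_in_X ctrl_in_U l_nonneg by (intro sum_nonneg) (auto simp: admissible_def)
  moreover have "0 \<le> Vf (traj f x us N)" using assms Vf_nonneg by (auto simp: admissible_def)
  ultimately show ?thesis by (simp add: cost_def)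
qed

lemma VN_le_cost:
  assumes "x \<in> X" "adm N x us"
  shows "Vopt N x \<le> J N x us"
  unfolding VN_def
proof (rule cInf_lower)
  show "J N x us \<in> J N x ` {us. adm N x us}" using assms by auto
  show "bdd_below (J N x ` {us. adm N x us})"
    using cost_nonneg[OF assms(1)] by (intro bdd_belowI[where m = 0]) auto
qed

lemma VN_attained:
  assumes "x \<in> X" "adm N x us"
  obtains ws where "adm N x ws" "Vopt N x = J N x ws"
proof -
  obtain ws where ws: "adm N x ws" "\<And>vs. adm N x vs \<Longrightarrow> J N x ws \<le> J N x vs"
    using attained assms by blast
  have "Vopt N x = J N x ws" unfolding VN_def
    by (rule cInf_eq_minimum) (use ws in auto)
  with ws that show ?thesis by blast
qed

lemma Nmin_admissible: "x \<in> X \<Longrightarrow> \<exists>us. adm (Nreach x) x us"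
  unfolding Nmin_def using reachable by (rule LeastI_ex)

lemma Nmin_le: "adm N x us \<Longrightarrow> Nreach x \<le> N"
  unfolding Nmin_def by (rule Least_le) blast

lemma admissible_0_iff: "adm 0 x us \<longleftrightarrow> x \<in> Xf"
  by (simp add: admissible_def feasible_seq_def)

lemma Nmin_eq_0_iff: "x \<in> X \<Longrightarrow> Nreach x = 0 \<longleftrightarrow> x \<in> Xf"
  using Nmin_admissible[of x] Nmin_le[of 0 x] by (auto simp: admissible_0_iff)

lemma Vfun_eq_Vf:
  assumes "x \<in> Xf"
  shows "V x = Vf x"
proof -
  have "Nreach x = 0" using assms Xf_subset Nmin_eq_0_iff by blast
  moreover have "J 0 x ` {us. adm 0 x us} = {Vf x}"
    using assms by (auto simp: admissible_0_iff cost_def)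
  ultimately show ?thesis by (simp add: Vfun_def VN_def)
qed

lemma Vfun_nonneg: "x \<in> X \<Longrightarrow> 0 \<le> V x"
  by (metis Nmin_admissible VN_attained cost_nonneg Vfun_def)

lemma Vfun_le_bound:
  assumes x: "x \<in> X"
    and l_le: "\<And>x u. x \<in> X \<Longrightarrow> u \<in> U \<Longrightarrow> l x u \<le> B\<^sub>l"
    and Vf_le: "\<And>x. x \<in> Xf \<Longrightarrow> Vf x \<le> B\<^sub>f"
    and N_le: "Nreach x \<le> M" and B\<^sub>l: "0 \<le> B\<^sub>l"
  shows "V x \<le> M * B\<^sub>l + B\<^sub>f"
proof -
  obtain us where us: "adm (Nreach x) x us" "Vopt (Nreach x) x = J (Nreach x) x us"
    using Nmin_admissible[OF x] VN_attained[OF x] by metis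
  have "(\<Sum>k<Nreach x. l (traj f x us k) (us k)) \<le> (\<Sum>k<Nreach x. B\<^sub>l)"
    using us(1) traj_in_X[OF x] ctrl_in_U by (intro sum_mono l_le) (auto simp: admissible_def)
  also have "\<dots> \<le> M * B\<^sub>l" using N_le B\<^sub>l by (simp add: mult_right_mono)
  finally show ?thesis
    using us Vf_le[of "traj f x us (Nreach x)"] by (simp add: Vfun_def cost_def admissible_def)
qed

lemma admissible_Cons:
  assumes "feasible_ctrl f h X U Y x u" "adm N (f x u) vs"
  shows "adm (Suc N) x (case_nat u vs)"
  using assms less_Suc_eq_0_disj
  by (fastforce simp: admissible_def feasible_seq_def traj_Cons simp del: traj.simps(2))

lemma admissible_tail:
  "adm (Suc N) x us \<Longrightarrow> adm N (f x (us 0)) (\<lambda>k. us (Suc k))"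
  by (auto simp: admissible_def feasible_seq_def traj_shift simp del: traj.simps(2))

lemma cost_Suc: "J (Suc N) x us = l x (us 0) + J N (f x (us 0)) (\<lambda>k. us (Suc k))"
  by (simp add: cost_def sum.lessThan_Suc_shift traj_shift del: sum.lessThan_Suc traj.simps(2))

text \<open>\<open>N\<close> decreases by exactly one along an optimal first move: the tail of the optimal sequence
  bounds \<open>N(x^+) \<le> N(x) - 1\<close>, and prepending the move to any sequence reaching \<open>\<bbbX>\<^sub>f\<close> from
  \<open>x^+\<close> bounds \<open>N(x) \<le> N(x^+) + 1\<close>.\<close>

lemma Vfun_closed_loop_decrease:
  assumes x: "x \<in> X"
    and optimal: "1 \<le> Nreach x \<Longrightarrow>
      \<exists>us. adm (Nreach x) x us \<and> J (Nreach x) x us = Vopt (Nreach x) x \<and> us 0 = u"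
    and terminal: "Nreach x = 0 \<Longrightarrow>
      feasible_ctrl f h X U Y x u \<and> f x u \<in> Xf \<and> l x u + Vf (f x u) \<le> Vf x"
  shows "u \<in> U \<and> f x u \<in> X \<and> V (f x u) \<le> V x - l x u"
proof (cases "Nreach x")
  case 0
  then have "x \<in> Xf" using Nmin_eq_0_iff[OF x] by simp
  then show ?thesis
    using terminal[OF 0] Vfun_eq_Vf[of x] Vfun_eq_Vf[of "f x u"] Xf_subset
    by (auto simp: feasible_ctrl_def)
next
  case (Suc n)
  obtain us where us: "adm (Suc n) x us" "J (Suc n) x us = Vopt (Suc n) x" "us 0 = u"
    using optimal Suc by auto
  have u: "feasible_ctrl f h X U Y x u"
    using us(1,3) by (auto simp: admissible_def feasible_seq_def)
  then have fx: "f x u \<in> X" "u \<in> U" by (simp_all add: feasible_ctrl_def)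
  have tail: "adm n (f x u) (\<lambda>k. us (Suc k))" using admissible_tail[OF us(1)] us(3) by simp
  obtain vs where "adm (Nreach (f x u)) (f x u) vs" using Nmin_admissible[OF fx(1)] by blast
  then have "Nreach x \<le> Suc (Nreach (f x u))" by (rule Nmin_le[OF admissible_Cons[OF u]])
  then have N: "Nreach (f x u) = n" using Nmin_le[OF tail] Suc by simp
  have "V (f x u) \<le> J n (f x u) (\<lambda>k. us (Suc k))"
    unfolding Vfun_def N by (rule VN_le_cost[OF fx(1) tail])
  also have "\<dots> = V x - l x u" using cost_Suc[of n x us] us(2,3) Suc by (simp add: Vfun_def)
  finally show ?thesis using fx by simp
qed

end

theorem proposition4:
  fixes f :: "'x::euclidean_space \<Rightarrow> 'u::euclidean_space \<Rightarrow> 'x"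
    and h :: "'x \<Rightarrow> 'u \<Rightarrow> 'y::euclidean_space"
    and l :: "'x \<Rightarrow> 'u \<Rightarrow> real"
    and Vf :: "'x \<Rightarrow> real"
    and X Xf :: "'x set" and U :: "'u set" and Y :: "'y set"
    and \<alpha>1 \<alpha>2 :: "real \<Rightarrow> real"
    and \<kappa> :: "'x \<Rightarrow> 'u"
  assumes A1_cont: "\<exists>S. open S \<and> X \<times> U \<subseteq> S \<and> continuous_on S (\<lambda>(x, u). f x u)
                     \<and> continuous_on S (\<lambda>(x, u). l x u) \<and> continuous_on S (\<lambda>(x, u). h x u)"
    and A1_Vf_cont: "\<exists>T. open T \<and> Xf \<subseteq> T \<and> continuous_on T Vf"
    and A1_l_nonneg: "\<forall>x\<in>X. \<forall>u\<in>U. l x u \<ge> 0"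
    and A1_l_pos_u: "\<forall>x\<in>X. \<forall>u\<in>U. u \<noteq> 0 \<longrightarrow> l x u > 0"
    and A1_Vf_pos: "\<forall>x\<in>Xf. x \<noteq> 0 \<longrightarrow> Vf x > 0"
    and A1_zero: "f 0 0 = 0" "l 0 0 = 0" "Vf 0 = 0"
    and A2: "closed X" "closed Xf" "Xf \<subseteq> X" "compact U"
            "0 \<in> interior X" "0 \<in> interior Xf" "0 \<in> interior U"
    and A3: "\<forall>x\<in>Xf. \<exists>u. feasible_ctrl f h X U Y x u \<and> f x u \<in> Xf \<and> l x u + Vf (f x u) \<le> Vf x"
    and A4: "\<forall>x\<in>X. \<exists>N us. admissible f h X U Y Xf N x us"
    and A5: "\<exists>M. \<forall>x\<in>X. Nmin f h X U Y Xf x \<le> M"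
    and A6: "class_K_inf \<alpha>1" "class_K_inf \<alpha>2"
            "\<forall>x\<in>X. \<forall>u\<in>U. l x u \<ge> \<alpha>1 (norm x)"
            "\<forall>x\<in>Xf. Vf x \<le> \<alpha>2 (norm x)"
    and attained: "\<forall>N. \<forall>x\<in>X. (\<exists>us. admissible f h X U Y Xf N x us) \<longrightarrow>
                     (\<exists>us. admissible f h X U Y Xf N x us \<and>
                        (\<forall>vs. admissible f h X U Y Xf N x vs \<longrightarrow> cost f l Vf N x us \<le> cost f l Vf N x vs))"
    and kappa_opt: "\<forall>x\<in>X. Nmin f h X U Y Xf x \<ge> 1 \<longrightarrow>
                     (\<exists>us. admissible f h X U Y Xf (Nmin f h X U Y Xf x) x us \<and>
                        cost f l Vf (Nmin f h X U Y Xf x) x us = VN f h l Vf X U Y Xf (Nmin f h X U Y Xf x) x \<and>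
                        us 0 = \<kappa> x)"
    and kappa_term: "\<forall>x\<in>X. Nmin f h X U Y Xf x = 0 \<longrightarrow>
                     feasible_ctrl f h X U Y x (\<kappa> x) \<and> f x (\<kappa> x) \<in> Xf \<and>
                     l x (\<kappa> x) + Vf (f x (\<kappa> x)) \<le> Vf x"
    and Xf_open_nbhd: "\<exists>W. open W \<and> 0 \<in> W \<and> W \<subseteq> Xf"
    and X_compact: "compact X"
  shows "(\<forall>x\<in>X. f x (\<kappa> x) \<in> X) \<and>
         (\<exists>\<beta>. class_K_inf \<beta> \<and>
            (\<forall>x\<in>X. \<alpha>1 (norm x) \<le> Vfun f h l Vf X U Y Xf x \<and>
                    Vfun f h l Vf X U Y Xf x \<le> \<beta> (norm x) \<and>
                    Vfun f h l Vf X U Y Xf (f x (\<kappa> x)) \<le> Vfun f h l Vf X U Y Xf x - \<alpha>1 (norm x))) \<and>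
         asymp_stable_on (\<lambda>x. f x (\<kappa> x)) X"
proof -
  interpret mpc_problem f h l Vf X Xf U Y
    using A1_l_nonneg A2(3) A4 attained A1_Vf_pos A1_zero(3)
    by unfold_locales (auto intro: less_imp_le simp: le_less)
  define g where "g = (\<lambda>x. f x (\<kappa> x))"
  have step: "g x \<in> X \<and> V (g x) \<le> V x - \<alpha>1 (norm x)" if x: "x \<in> X" for x
    using Vfun_closed_loop_decrease[OF x, of "\<kappa> x"] kappa_opt kappa_term A6(3) x
    by (fastforce simp: g_def)
  have lower: "\<alpha>1 (norm x) \<le> V x" if "x \<in> X" for x
    using step[OF that] Vfun_nonneg[of "g x"] by linarith
  obtain S where S: "X \<times> U \<subseteq> S" "continuous_on S (\<lambda>(x, u). l x u)" using A1_cont by blast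
  obtain T where T: "Xf \<subseteq> T" "continuous_on T Vf" using A1_Vf_cont by blast
  have "compact (X \<times> U)" "compact Xf"
    using X_compact A2 compact_Int_closed[OF X_compact A2(2)] by (auto simp: compact_Times Int_absorb1)
  then obtain B\<^sub>l B\<^sub>f where B\<^sub>l: "\<And>x u. x \<in> X \<Longrightarrow> u \<in> U \<Longrightarrow> l x u \<le> B\<^sub>l"
    and B\<^sub>f: "\<And>x. x \<in> Xf \<Longrightarrow> Vf x \<le> B\<^sub>f"
    using continuous_attains_sup[of "X \<times> U" "\<lambda>(x, u). l x u"] continuous_attains_sup[of Xf Vf]
      continuous_on_subset[OF S(2,1)] continuous_on_subset[OF T(2,1)] A2(3)
    by (metis (lifting) SigmaI case_prod_conv empty_iff)
  obtain M where M: "\<forall>x\<in>X. Nreach x \<le> M" using A5 by blast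
  obtain r where r: "0 < r" "ball 0 r \<subseteq> Xf"
    using Xf_open_nbhd by (meson openE subset_trans)
  obtain \<beta> where \<beta>: "class_K_inf \<beta>" "\<forall>x\<in>X. V x \<le> \<beta> (norm x)"
    using class_K_inf_bound_from_local_bound[OF A6(2) r(1), of X V "M * max 0 B\<^sub>l + B\<^sub>f"]
      Vfun_eq_Vf A6(4) r(2) Vfun_le_bound[OF _ _ B\<^sub>f, of _ "max 0 B\<^sub>l" M] B\<^sub>l M
    by (fastforce simp: subset_iff)
  have "asymp_stable_on g X"
    using step lower \<beta> by (intro Lyapunov_asymp_stable_on[where V = V, OF A6(1) \<beta>(1)]) auto
  then show ?thesis using step lower \<beta> unfolding g_def by blast
qed

end
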